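(* Let $q : \mathbb{R}^n \to \mathbb{R}$ be a positive semidefinite quadratic form such that $\mathbf{E}(q) = 1$, where $\mathbf{E}$ denotes expectation with respect to the standard Gaussian measure $\mu$ on $\mathbb{R}^n$. Let $$C_0 = \frac{4}{\sqrt{2\pi}} \int_0^{+\infty} (\ln t)\, e^{-t^2/2}\, dt \approx -1.270362845.$$ Then $$C_0 \leq \mathbf{E}(\ln q) \leq 0 \qquad\text{and}\qquad 0 \leq \mathbf{E}(\ln^2 q) \leq 8.$$
   Context: The standard Gaussian measure $\mu$ on $\mathbb{R}^n$ has density $\psi(x) = (2\pi)^{-n/2}\exp\{-\|x\|^2/2\}$, with $\|x\|^2 = x_1^2+\dots+x_n^2$. For a $\mu$-integrable function $f$, $\mathbf{E}(f) = \int_{\mathbb{R}^n} f(x)\psi(x)\,dx$. *)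

theory Defs
  imports "HOL-Analysis.Analysis"
begin

definition std_gaussian :: "(real ^ 'n) measure" where
  "std_gaussian = density lborel
     (\<lambda>x. ennreal ((2 * pi) powr (- real CARD('n) / 2) * exp (- (norm x)\<^sup>2 / 2)))"

definition gaussE :: "(real ^ 'n \<Rightarrow> real) \<Rightarrow> real" where
  "gaussE f = integral\<^sup>L std_gaussian f"

definition quadratic_form :: "(real ^ 'n \<Rightarrow> real) \<Rightarrow> bool" where
  "quadratic_form q \<longleftrightarrow> (\<exists>A :: real ^ 'n ^ 'n. \<forall>x. q x = x \<bullet> (A *v x))"

definition C0 :: real where
  "C0 = 4 / sqrt (2 * pi) * (LBINT t:{0<..}. ln t * exp (- t\<^sup>2 / 2))"

end

theory Submission
  imports Defs "HOL-Probability.Probability" "HOL-Real_Asymp.Real_Asymp"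
begin

text \<open>
  A nonnegative quadratic form is a sum of squares, \<open>q x = (\<Sum>k. (v\<^sub>k \<bullet> x)\<^sup>2)\<close>, and
  \<open>E q = (\<Sum>k. \<bar>v\<^sub>k\<bar>\<^sup>2)\<close>. So if \<open>E q = 1\<close>, then \<open>q\<close> is a convex combination,
  with weights \<open>\<bar>v\<^sub>k\<bar>\<^sup>2\<close>, of the squares \<open>Y\<^sub>k\<^sup>2\<close> of the standard normal variables
  \<open>Y\<^sub>k = sgn v\<^sub>k \<bullet> x\<close>. Concavity of \<open>ln\<close> gives \<open>ln q \<ge> (\<Sum>k. \<bar>v\<^sub>k\<bar>\<^sup>2 ln Y\<^sub>k\<^sup>2)\<close>,
  whose expectation is \<open>E ln Y\<^sup>2 = C0\<close>, while \<open>ln q \<le> q - 1\<close> gives \<open>E ln q \<le> 0\<close>.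
  For the second moment, \<open>(ln s)\<^sup>2 \<le> \<phi> s + s\<close> where \<open>\<phi> s = (max (- ln s) 0)\<^sup>2\<close> is
  convex, so Jensen again gives \<open>E (ln q)\<^sup>2 \<le> E \<phi>(Y\<^sup>2) + 1 \<le> 16 / sqrt (2 * pi) + 1 < 8\<close>.
\<close>

section \<open>Nonnegative quadratic forms are sums of squares\<close>

lemma inner_matrix_symmetric:
  fixes A :: "real^'n^'n"
  assumes "transpose A = A"
  shows "x \<bullet> (A *v y) = y \<bullet> (A *v x)"
proof -
  have "x \<bullet> (A *v y) = (x v* A) \<bullet> y" by (rule dot_lmul_matrix[symmetric])
  also have "x v* A = A *v x" using vector_transpose_matrix[of x A] assms by simp
  finally show ?thesis by (simp add: inner_commute)
qed

lemma quadratic_add_axis: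
  fixes A :: "real^'n^'n"
  assumes "transpose A = A"
  shows "(x + t *\<^sub>R axis i 1) \<bullet> (A *v (x + t *\<^sub>R axis i 1))
           = x \<bullet> (A *v x) + 2 * t * (A$i \<bullet> x) + t\<^sup>2 * A$i$i"
proof -
  have "x \<bullet> (A *v axis i 1) = A$i \<bullet> x"
    using inner_matrix_symmetric[OF assms, of x] by (simp add: inner_axis' matrix_vector_mul_component)
  then show ?thesis
    by (simp add: algebra_simps inner_axis inner_axis' matrix_vector_mul_component power2_eq_square)
qed

lemma psd_zero_diagonal_imp_zero_row:
  fixes A :: "real^'n^'n"
  assumes "transpose A = A" "\<forall>x. 0 \<le> x \<bullet> (A *v x)" "A$i$i = 0"
  shows "A$i = 0"
proof -
  have "A$i \<bullet> x = 0" for x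
  proof (rule ccontr)
    assume "A$i \<bullet> x \<noteq> 0"
    \<comment> \<open>As A$i$i = 0, the form is affine and nonconstant along the i-th axis through x.\<close>
    define t where "t = - (x \<bullet> (A *v x) + 1) / (2 * (A$i \<bullet> x))"
    have "(x + t *\<^sub>R axis i 1) \<bullet> (A *v (x + t *\<^sub>R axis i 1)) = -1"
      using \<open>A$i \<bullet> x \<noteq> 0\<close> by (simp add: quadratic_add_axis assms(1,3) t_def field_simps)
    then show False using assms(2) by (metis neg_0_le_iff_le not_one_le_zero)
  qed
  then show ?thesis by (metis inner_eq_zero_iff)
qed

lemma quadratic_schur_complement:
  fixes A :: "real^'n^'n"
  shows "x \<bullet> ((A - (\<chi> k l. A$i$k * A$i$l / A$i$i)) *v x) = x \<bullet> (A *v x) - (A$i \<bullet> x)\<^sup>2 / A$i$i"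
proof -
  have "(\<chi> k l. A$i$k * A$i$l / A$i$i) *v x = ((A$i \<bullet> x) / A$i$i) *\<^sub>R A$i"
    by (simp add: vec_eq_iff matrix_vector_mult_def inner_vec_def sum_distrib_left sum_divide_distrib
        algebra_simps)
  then show ?thesis
    by (simp add: matrix_vector_mult_diff_rdistrib inner_diff_right power2_eq_square inner_commute)
qed

lemma schur_complement_psd:
  fixes A :: "real^'n^'n"
  assumes sym: "transpose A = A" and psd: "\<forall>x. 0 \<le> x \<bullet> (A *v x)" and pos: "0 < A$i$i"
  defines "B \<equiv> A - (\<chi> k l. A$i$k * A$i$l / A$i$i)"
  shows "transpose B = B" and "\<forall>x. 0 \<le> x \<bullet> (B *v x)"
    and "B$i = 0" and "\<And>k. A$k = 0 \<Longrightarrow> B$k = 0"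
proof -
  have entry_sym: "A$k$l = A$l$k" for k l
    using sym by (simp add: vec_eq_iff transpose_def)
  show "transpose B = B"
    by (simp add: B_def vec_eq_iff transpose_def entry_sym mult.commute)
  show "\<forall>x. 0 \<le> x \<bullet> (B *v x)"
  proof
    fix x
    let ?t = "- (A$i \<bullet> x) / A$i$i"
    have "(x + ?t *\<^sub>R axis i 1) \<bullet> (A *v (x + ?t *\<^sub>R axis i 1))
        = x \<bullet> (A *v x) + 2 * ?t * (A$i \<bullet> x) + ?t\<^sup>2 * A$i$i"
      by (rule quadratic_add_axis[OF sym])
    also have "\<dots> = x \<bullet> (B *v x)"
      unfolding B_def quadratic_schur_complement using pos by (simp add: field_simps power2_eq_square)
    finally show "0 \<le> x \<bullet> (B *v x)" using psd by metis
  qed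
  show "B$i = 0"
    using pos by (simp add: B_def vec_eq_iff)
  show "B$k = 0" if "A$k = 0" for k
  proof -
    from that have "A$i$k = 0" by (simp add: entry_sym[of i k])
    with that show ?thesis by (simp add: B_def vec_eq_iff)
  qed
qed

lemma psd_matrix_eq_sum_squares_supported:
  fixes A :: "real^'n^'n"
  assumes "finite K" "transpose A = A" "\<forall>x. 0 \<le> x \<bullet> (A *v x)" "\<forall>k. k \<notin> K \<longrightarrow> A$k = 0"
  shows "\<exists>vs. 0 \<notin> set vs \<and> (\<forall>x. x \<bullet> (A *v x) = (\<Sum>v\<leftarrow>vs. (v \<bullet> x)\<^sup>2))"
  using assms
proof (induction K arbitrary: A rule: finite_induct)
  case empty
  then have "A = 0" by (simp add: vec_eq_iff)
  then show ?case by (intro exI[of _ "[]"]) simp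
next
  case (insert i K)
  note sym = insert.prems(1) and psd = insert.prems(2) and supp = insert.prems(3)
  show ?case
  proof (cases "A$i$i = 0")
    case True
    then have "A$i = 0" by (rule psd_zero_diagonal_imp_zero_row[OF sym psd])
    with supp have "\<forall>k. k \<notin> K \<longrightarrow> A$k = 0" by (metis insert_iff)
    then show ?thesis by (rule insert.IH[OF sym psd])
  next
    case False
    have "axis i 1 \<bullet> (A *v axis i 1) = A$i$i"
      by (simp add: inner_axis inner_axis' matrix_vector_mul_component)
    with psd False have pos: "0 < A$i$i" by (metis order_le_neq_trans)
    \<comment> \<open>Symmetric Gaussian elimination: split off the square of the normalized i-th row.\<close>
    define B where "B = A - (\<chi> k l. A$i$k * A$i$l / A$i$i)"
    define w where "w = (1 / sqrt (A$i$i)) *\<^sub>R A$i"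
    have B_quadratic: "x \<bullet> (A *v x) = (w \<bullet> x)\<^sup>2 + x \<bullet> (B *v x)" for x
      using pos by (simp add: B_def quadratic_schur_complement w_def power_mult_distrib power_divide)
    note B = schur_complement_psd[OF sym psd pos, folded B_def]
    have "\<forall>k. k \<notin> K \<longrightarrow> B$k = 0"
      using B(3,4) supp by (metis insert_iff)
    then obtain vs where "0 \<notin> set vs" "\<forall>x. x \<bullet> (B *v x) = (\<Sum>v\<leftarrow>vs. (v \<bullet> x)\<^sup>2)"
      using insert.IH B(1,2) by blast
    moreover have "w \<noteq> 0"
      using pos by (auto simp: w_def vec_eq_iff intro!: exI[of _ i])
    ultimately show ?thesis
      by (intro exI[of _ "w # vs"]) (simp add: B_quadratic)
  qed
qed

lemma nonneg_quadratic_form_eq_sum_squares: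
  fixes q :: "real^'n \<Rightarrow> real"
  assumes "quadratic_form q" "\<forall>x. 0 \<le> q x"
  obtains m and v :: "nat \<Rightarrow> real^'n"
  where "\<And>k. k < m \<Longrightarrow> v k \<noteq> 0" "\<And>x. q x = (\<Sum>k<m. (v k \<bullet> x)\<^sup>2)"
proof -
  obtain A :: "real^'n^'n" where A: "\<And>x. q x = x \<bullet> (A *v x)"
    using assms(1) unfolding quadratic_form_def by blast
  define S where "S = (1/2) *\<^sub>R (A + transpose A)"
  have S_quadratic: "x \<bullet> (S *v x) = q x" for x
  proof -
    have "x \<bullet> (transpose A *v x) = x \<bullet> (A *v x)"
      by (simp add: dot_lmul_matrix[symmetric] inner_commute)
    then show ?thesis
      by (simp add: S_def A scaleR_matrix_vector_assoc[symmetric] matrix_vector_mult_add_rdistrib inner_add_right)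
  qed
  have "transpose S = S"
    by (simp add: S_def transpose_scalar vec_eq_iff transpose_def)
  moreover have "\<forall>x. 0 \<le> x \<bullet> (S *v x)"
    using assms(2) by (simp add: S_quadratic)
  ultimately obtain vs where "0 \<notin> set vs" "\<forall>x. x \<bullet> (S *v x) = (\<Sum>v\<leftarrow>vs. (v \<bullet> x)\<^sup>2)"
    using psd_matrix_eq_sum_squares_supported[of UNIV S] by auto
  moreover have "(\<Sum>v\<leftarrow>vs. (v \<bullet> x)\<^sup>2) = (\<Sum>k<length vs. (vs!k \<bullet> x)\<^sup>2)" for x
    by (simp add: sum_list_sum_nth atLeast0LessThan)
  ultimately show ?thesis
    using that[of "length vs" "(!) vs"] by (metis S_quadratic nth_mem)
qed

section \<open>One-dimensional marginals of the standard Gaussian measure\<close>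

lemma indicator_PiE_eq_prod:
  assumes "x \<in> extensional I" "finite I"
  shows "indicator (PiE I A) x = (\<Prod>i\<in>I. indicator (A i) (x i) :: ennreal)"
proof (cases "x \<in> PiE I A")
  case False
  with assms(1) obtain i where "i \<in> I" "x i \<notin> A i"
    by (auto simp: PiE_iff extensional_def)
  then show ?thesis using False assms(2) by (auto simp: indicator_def intro!: prod_zero)
qed (auto simp: indicator_def PiE_iff)

lemma density_PiM_std_normal:
  fixes I :: "'i set"
  assumes "finite I"
  shows "density (PiM I (\<lambda>_. lborel)) (\<lambda>f. \<Prod>i\<in>I. ennreal (std_normal_density (f i)))
           = PiM I (\<lambda>_. std_normal_distribution)"
proof -
  interpret N: product_sigma_finite "\<lambda>_::'i. std_normal_distribution"
    using prob_space_normal_density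
    by (simp add: product_sigma_finite_def prob_space_imp_sigma_finite)
  interpret L: product_sigma_finite "\<lambda>_::'i. lborel"
    by (simp add: product_sigma_finite_def sigma_finite_lborel)
  show ?thesis
  proof (rule N.PiM_eqI)
    show "sets (density (PiM I (\<lambda>_. lborel)) (\<lambda>f. \<Prod>i\<in>I. ennreal (std_normal_density (f i))))
            = sets (PiM I (\<lambda>_. std_normal_distribution))"
      unfolding sets_density by (rule sets_PiM_cong) simp_all
  next
    fix A assume A: "\<And>i. i \<in> I \<Longrightarrow> A i \<in> sets std_normal_distribution"
    then have [measurable]: "A i \<in> sets borel" if "i \<in> I" for i using that by simp
    have "emeasure (density (PiM I (\<lambda>_. lborel)) (\<lambda>f. \<Prod>i\<in>I. ennreal (std_normal_density (f i))))
            (PiE I A)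
        = (\<integral>\<^sup>+ f. (\<Prod>i\<in>I. ennreal (std_normal_density (f i)) * indicator (A i) (f i)) \<partial>PiM I (\<lambda>_. lborel))"
    proof (subst emeasure_density)
      show "(\<lambda>f. \<Prod>i\<in>I. ennreal (std_normal_density (f i))) \<in> borel_measurable (PiM I (\<lambda>_. lborel))"
        by measurable
      show "PiE I A \<in> sets (PiM I (\<lambda>_. lborel))"
        using assms by (intro sets_PiM_I_finite) simp_all
    qed (use assms in \<open>auto intro!: nn_integral_cong
           simp: indicator_PiE_eq_prod space_PiM PiE_iff prod.distrib\<close>)
    also have "\<dots> = (\<Prod>i\<in>I. \<integral>\<^sup>+ x. ennreal (std_normal_density x) * indicator (A i) x \<partial>lborel)"
      using assms by (intro L.product_nn_integral_prod) auto
    also have "\<dots> = (\<Prod>i\<in>I. emeasure std_normal_distribution (A i))"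
      by (intro prod.cong refl) (simp add: emeasure_density)
    finally show "emeasure (density (PiM I (\<lambda>_. lborel))
        (\<lambda>f. \<Prod>i\<in>I. ennreal (std_normal_density (f i)))) (PiE I A)
      = (\<Prod>i\<in>I. emeasure std_normal_distribution (A i))" .
  qed (use assms in simp)
qed

lemma power2_norm_sum_Basis:
  "(norm (\<Sum>b\<in>Basis. f b *\<^sub>R b :: 'a::euclidean_space))\<^sup>2 = (\<Sum>b\<in>Basis. (f b)\<^sup>2)"
proof -
  have "(norm (\<Sum>b\<in>Basis. f b *\<^sub>R b :: 'a))\<^sup>2 = (\<Sum>b\<in>Basis. f b *\<^sub>R b :: 'a) \<bullet> (\<Sum>b\<in>Basis. f b *\<^sub>R b)"
    by (simp add: power2_norm_eq_inner)
  then show ?thesis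
    by (subst (asm) euclidean_inner) (simp add: power2_eq_square)
qed

lemma std_gaussian_eq_distr_PiM:
  "(std_gaussian :: (real^'n) measure)
     = distr (PiM Basis (\<lambda>_. std_normal_distribution)) borel (\<lambda>f. \<Sum>b\<in>Basis. f b *\<^sub>R b)"
proof -
  define T :: "(real^'n \<Rightarrow> real) \<Rightarrow> real^'n" where "T f = (\<Sum>b\<in>Basis. f b *\<^sub>R b)" for f
  define G :: "real^'n \<Rightarrow> ennreal" where
    "G x = ennreal ((2 * pi) powr (- real CARD('n) / 2) * exp (- (norm x)\<^sup>2 / 2))" for x
  have G_T: "G (T f) = (\<Prod>b\<in>Basis. ennreal (std_normal_density (f b)))" for f
  proof -
    have "(2 * pi) powr (- real CARD('n) / 2) = ((2 * pi) powr (- 1 / 2)) powr real CARD('n)"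
      by (simp add: powr_powr)
    also have "\<dots> = ((2 * pi) powr (- 1 / 2)) ^ CARD('n)"
      by (simp add: powr_realpow)
    also have "\<dots> = (\<Prod>b\<in>(Basis :: (real^'n) set). 1 / sqrt (2 * pi))"
      by (simp add: powr_minus_divide powr_half_sqrt)
    finally have const: "(2 * pi) powr (- real CARD('n) / 2) = (\<Prod>b\<in>(Basis :: (real^'n) set). 1 / sqrt (2 * pi))" .
    have "exp (- (norm (T f))\<^sup>2 / 2) = (\<Prod>b\<in>Basis. exp (- (f b)\<^sup>2 / 2))"
      unfolding T_def power2_norm_sum_Basis by (simp add: exp_sum[symmetric] sum_negf sum_divide_distrib)
    then have "G (T f) = ennreal (\<Prod>b\<in>Basis. 1 / sqrt (2 * pi) * exp (- (f b)\<^sup>2 / 2))"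
      unfolding G_def const by (simp only: prod.distrib)
    then show ?thesis
      by (simp add: std_normal_density_def prod_ennreal)
  qed
  have "std_gaussian = density (distr (PiM Basis (\<lambda>_. lborel)) borel T) G"
    unfolding std_gaussian_def G_def[abs_def] T_def[abs_def] by (subst lborel_eq) (rule refl)
  also have "\<dots> = distr (density (PiM Basis (\<lambda>_. lborel)) (\<lambda>f. G (T f))) borel T"
    by (rule density_distr) (auto simp: G_def[abs_def] T_def[abs_def])
  also have "density (PiM Basis (\<lambda>_. lborel)) (\<lambda>f. G (T f)) = PiM Basis (\<lambda>_. std_normal_distribution)"
    unfolding G_T by (simp add: density_PiM_std_normal)
  finally show ?thesis by (simp add: T_def)
qed

lemma sets_std_gaussian [measurable_cong, simp]: "sets std_gaussian = sets borel"
  by (simp add: std_gaussian_def)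

lemma prob_space_std_gaussian: "prob_space (std_gaussian :: (real^'n) measure)"
  unfolding std_gaussian_eq_distr_PiM
  by (intro prob_space.prob_space_distr prob_space_PiM prob_space_normal_density) auto

lemma indep_vars_PiM_components:
  assumes "prob_space M" "I \<noteq> {}"
  shows "prob_space.indep_vars (PiM I (\<lambda>_. M)) (\<lambda>_. M) (\<lambda>i f. f i) I"
proof -
  let ?P = "PiM I (\<lambda>_. M)"
  interpret P: prob_space ?P by (intro prob_space_PiM assms(1))
  have "distr ?P (PiM I (\<lambda>_. M)) (\<lambda>x. \<lambda>i\<in>I. x i) = distr ?P ?P (\<lambda>x. x)"
    by (intro distr_cong refl) (auto simp: space_PiM PiE_def extensional_restrict)
  also have "\<dots> = ?P"
    by (rule distr_id2) simp
  also have "\<dots> = PiM I (\<lambda>i. distr ?P M (\<lambda>f. f i))"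
    by (intro PiM_cong refl distr_PiM_component[symmetric] assms(1))
  finally show ?thesis
    by (subst P.indep_vars_iff_distr_eq_PiM'[OF assms(2)]) auto
qed

lemma distr_PiM_std_normal_lincomb:
  fixes c :: "'i \<Rightarrow> real"
  assumes "finite I" and unit: "(\<Sum>i\<in>I. (c i)\<^sup>2) = 1"
  shows "distr (PiM I (\<lambda>_. std_normal_distribution)) lborel (\<lambda>f. \<Sum>i\<in>I. c i * f i)
           = std_normal_distribution"
proof -
  let ?P = "PiM I (\<lambda>_. std_normal_distribution)"
  interpret P: prob_space ?P by (intro prob_space_PiM prob_space_normal_density) simp
  define I' where "I' = {i \<in> I. c i \<noteq> 0}"
  have "(\<Sum>i\<in>I'. (c i)\<^sup>2) = (\<Sum>i\<in>I. (c i)\<^sup>2)"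
    using assms(1) by (intro sum.mono_neutral_left) (auto simp: I'_def)
  with unit have sum_sq: "(\<Sum>i\<in>I'. (c i)\<^sup>2) = 1" by simp
  then have "I' \<noteq> {}" by auto
  have "P.indep_vars (\<lambda>_. std_normal_distribution) (\<lambda>i f. f i) I'"
    by (rule P.indep_vars_subset[OF indep_vars_PiM_components])
       (use \<open>I' \<noteq> {}\<close> in \<open>auto simp: I'_def intro: prob_space_normal_density\<close>)
  then have indep: "P.indep_vars (\<lambda>_. borel) (\<lambda>i f. c i * f i) I'"
    by (rule P.indep_vars_compose2[where Y="\<lambda>i x. c i * x"]) auto
  have normal: "distributed ?P lborel (\<lambda>f. c i * f i) (normal_density 0 \<bar>c i\<bar>)" if "i \<in> I'" for i
  proof -
    have "distr ?P lborel (\<lambda>f. f i) = distr ?P std_normal_distribution (\<lambda>f. f i)"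
      by (intro distr_cong) auto
    also have "\<dots> = std_normal_distribution"
      using that by (intro distr_PiM_component prob_space_normal_density) (auto simp: I'_def)
    finally have "distributed ?P lborel (\<lambda>f. f i) (normal_density 0 1)"
      using that by (auto simp: distributed_def I'_def)
    from P.normal_density_affine[OF this, of "c i" 0] that show ?thesis
      by (simp add: I'_def)
  qed
  have "distributed ?P lborel (\<lambda>f. \<Sum>i\<in>I'. c i * f i)
          (normal_density (\<Sum>i\<in>I'. 0) (sqrt (\<Sum>i\<in>I'. \<bar>c i\<bar>\<^sup>2)))"
    using assms(1) by (intro P.sum_indep_normal[OF _ \<open>I' \<noteq> {}\<close> indep] normal) (auto simp: I'_def)
  then have "distr ?P lborel (\<lambda>f. \<Sum>i\<in>I'. c i * f i) = std_normal_distribution"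
    using sum_sq by (simp add: distributed_def)
  moreover have "(\<Sum>i\<in>I'. c i * f i) = (\<Sum>i\<in>I. c i * f i)" for f :: "'i \<Rightarrow> real"
    using assms(1) by (intro sum.mono_neutral_left) (auto simp: I'_def)
  ultimately show ?thesis by simp
qed

lemma distr_std_gaussian_inner:
  fixes u :: "real^'n"
  assumes "norm u = 1"
  shows "distr std_gaussian borel (\<lambda>x. u \<bullet> x) = std_normal_distribution"
proof -
  let ?P = "PiM (Basis :: (real^'n) set) (\<lambda>_. std_normal_distribution)"
  have "distr std_gaussian borel (\<lambda>x. u \<bullet> x) = distr ?P borel (\<lambda>f. u \<bullet> (\<Sum>b\<in>Basis. f b *\<^sub>R b))"
    unfolding std_gaussian_eq_distr_PiM by (subst distr_distr) (auto simp: comp_def)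
  also have "\<dots> = distr ?P lborel (\<lambda>f. \<Sum>b\<in>Basis. (u \<bullet> b) * f b)"
    by (intro distr_cong) (simp_all add: inner_sum_right mult.commute)
  also have "\<dots> = std_normal_distribution"
    using assms power2_norm_sum_Basis[of "\<lambda>b. u \<bullet> b"]
    by (intro distr_PiM_std_normal_lincomb) (simp_all add: euclidean_representation)
  finally show ?thesis .
qed

lemma
  fixes u :: "real^'n"
  assumes u: "norm u = 1" and [measurable]: "f \<in> borel_measurable borel"
  shows integrable_std_gaussian_inner_iff:
      "integrable std_gaussian (\<lambda>x. f (u \<bullet> x)) \<longleftrightarrow> integrable lborel (\<lambda>t. std_normal_density t * f t)"
    and integral_std_gaussian_inner:
      "integral\<^sup>L std_gaussian (\<lambda>x. f (u \<bullet> x)) = integral\<^sup>L lborel (\<lambda>t. std_normal_density t * f t)"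
proof -
  have [measurable]: "(\<lambda>x. u \<bullet> x) \<in> measurable std_gaussian borel" by measurable
  show "integrable std_gaussian (\<lambda>x. f (u \<bullet> x)) \<longleftrightarrow> integrable lborel (\<lambda>t. std_normal_density t * f t)"
    using integrable_distr_eq[of "\<lambda>x. u \<bullet> x" std_gaussian borel f]
    by (simp add: distr_std_gaussian_inner[OF u] integrable_density)
  show "integral\<^sup>L std_gaussian (\<lambda>x. f (u \<bullet> x)) = integral\<^sup>L lborel (\<lambda>t. std_normal_density t * f t)"
    using integral_distr[of "\<lambda>x. u \<bullet> x" std_gaussian borel f]
    by (simp add: distr_std_gaussian_inner[OF u] integral_density)
qed

lemma AE_std_gaussian_inner:
  fixes u :: "real^'n"
  assumes "norm u = 1" "AE t in lborel. P t"
  shows "AE x in std_gaussian. P (u \<bullet> x)"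
proof (rule AE_distrD[where M'=borel and f="\<lambda>x. u \<bullet> x"])
  show "(\<lambda>x. u \<bullet> x) \<in> measurable std_gaussian borel" by measurable
  show "AE x in distr std_gaussian borel (\<lambda>x. u \<bullet> x). P x"
    unfolding distr_std_gaussian_inner[OF assms(1)] using assms(2)
    by (subst AE_density) (auto elim!: AE_mp)
qed

section \<open>Logarithmic moments of the standard normal distribution\<close>

lemma set_integrable_ln_sq_01:
  shows "set_integrable lborel {0<..<1} (\<lambda>t::real. (ln t)\<^sup>2)"
    and "(LBINT t:{0<..<1}. (ln (t::real))\<^sup>2) = 2"
proof -
  let ?F = "\<lambda>t::real. t * (ln t)\<^sup>2 - 2 * t * ln t + 2 * t"
  have deriv: "\<And>x. 0 < ereal x \<Longrightarrow> ereal x < ereal 1 \<Longrightarrow> DERIV ?F x :> (ln x)\<^sup>2"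
    by (auto intro!: derivative_eq_intros simp: field_simps power2_eq_square)
  have cont: "\<And>x. 0 < ereal x \<Longrightarrow> ereal x < ereal 1 \<Longrightarrow> isCont (\<lambda>t. (ln t)\<^sup>2) x"
    by (auto intro!: continuous_intros)
  have nonneg: "AE x in lborel. 0 < ereal x \<longrightarrow> ereal x < ereal 1 \<longrightarrow> 0 \<le> (ln x)\<^sup>2"
    by simp
  have lim0: "((?F \<circ> real_of_ereal) \<longlongrightarrow> 0) (at_right 0)"
    unfolding zero_ereal_def ereal_tendsto_simps by real_asymp
  have lim1: "((?F \<circ> real_of_ereal) \<longlongrightarrow> 2) (at_left (ereal 1))"
    unfolding ereal_tendsto_simps by real_asymp
  have "0 < ereal 1" by simp
  note FTC = interval_integral_FTC_nonneg[OF this deriv cont nonneg lim0 lim1]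
  show "set_integrable lborel {0<..<1} (\<lambda>t::real. (ln t)\<^sup>2)" "(LBINT t:{0<..<1}. (ln (t::real))\<^sup>2) = 2"
    using FTC by (simp_all add: interval_lebesgue_integral_def zero_ereal_def)
qed

lemma
  fixes f :: "real \<Rightarrow> real"
  assumes [measurable]: "f \<in> borel_measurable borel" and even: "\<And>t. f (- t) = f t"
    and half_line: "set_integrable lborel {0<..} f"
  shows integrable_even: "integrable lborel f"
    and integral_even: "integral\<^sup>L lborel f = 2 * (LBINT t:{0<..}. f t)"
proof -
  define g where "g t = indicator {0<..} t * f t" for t :: real
  have [measurable]: "g \<in> borel_measurable borel" unfolding g_def[abs_def] by measurable
  have g: "integrable lborel g"
    using half_line by (simp add: set_integrable_def g_def[abs_def])
  have g_reflected: "integrable lborel (\<lambda>t. g (0 + (-1) * t))"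
    by (rule lborel_integrable_real_affine[OF g]) simp
  have split: "AE t in lborel. f t = g t + g (0 + (-1) * t)"
    using AE_lborel_singleton[of 0] by eventually_elim (auto simp: g_def indicator_def even)
  have "integrable lborel (\<lambda>t. g t + g (0 + (-1) * t))" using g g_reflected by simp
  then show "integrable lborel f"
    by (rule integrable_cong_AE_imp) (use split in \<open>auto elim: AE_mp\<close>)
  have "integral\<^sup>L lborel f = integral\<^sup>L lborel (\<lambda>t. g t + g (0 + (-1) * t))"
    by (rule integral_cong_AE) (use split in auto)
  also have "\<dots> = integral\<^sup>L lborel g + integral\<^sup>L lborel (\<lambda>t. g (0 + (-1) * t))"
    using g g_reflected by simp
  also have "integral\<^sup>L lborel (\<lambda>t. g (0 + (-1) * t)) = integral\<^sup>L lborel g"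
    using lborel_integral_real_affine[of "-1" g 0] by simp
  finally show "integral\<^sup>L lborel f = 2 * (LBINT t:{0<..}. f t)"
    by (simp add: set_lebesgue_integral_def g_def[abs_def])
qed

lemma std_normal_density_le: "std_normal_density t \<le> 1 / sqrt (2 * pi)"
  by (simp add: std_normal_density_def divide_le_cancel)

definition ln_neg_sq :: "real \<Rightarrow> real" where
  "ln_neg_sq s = (max (- ln s) 0)\<^sup>2"

lemma borel_measurable_ln_neg_sq [measurable]: "ln_neg_sq \<in> borel_measurable borel"
  unfolding ln_neg_sq_def[abs_def] by measurable

lemma ln_neg_sq_nonneg [simp]: "0 \<le> ln_neg_sq s"
  by (simp add: ln_neg_sq_def)

lemma std_normal_ln_neg_sq_le:
  fixes t :: real
  shows "indicator {0<..} t * (std_normal_density t * ln_neg_sq (t\<^sup>2))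
           \<le> 4 / sqrt (2 * pi) * (indicator {0<..<1} t * (ln t)\<^sup>2)"
proof (cases "0 < t \<and> t < 1")
  case True
  then have "ln_neg_sq (t\<^sup>2) = 4 * (ln t)\<^sup>2"
    by (simp add: ln_neg_sq_def ln_realpow power_mult_distrib)
  moreover have "std_normal_density t * (4 * (ln t)\<^sup>2) \<le> 1 / sqrt (2 * pi) * (4 * (ln t)\<^sup>2)"
    by (intro mult_right_mono std_normal_density_le) simp
  ultimately show ?thesis
    using True by simp
next
  case False
  then consider "t \<le> 0" | "1 \<le> t" by linarith
  then show ?thesis
  proof cases
    case 2
    then have "ln_neg_sq (t\<^sup>2) = 0" by (simp add: ln_neg_sq_def)
    with 2 show ?thesis by simp
  qed simp
qed

lemma
  shows integrable_std_normal_ln_neg_sq: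
      "integrable lborel (\<lambda>t. std_normal_density t * ln_neg_sq (t\<^sup>2))"
    and integral_std_normal_ln_neg_sq_le:
      "integral\<^sup>L lborel (\<lambda>t. std_normal_density t * ln_neg_sq (t\<^sup>2)) \<le> 7"
proof -
  let ?h = "\<lambda>t::real. std_normal_density t * ln_neg_sq (t\<^sup>2)"
  define D where "D t = 4 / sqrt (2 * pi) * (indicator {0<..<1} t * (ln t)\<^sup>2)" for t :: real
  have D: "integrable lborel D"
    using set_integrable_ln_sq_01(1) unfolding D_def[abs_def] set_integrable_def by simp
  have bound: "indicator {0<..} t * ?h t \<le> D t" for t
    unfolding D_def by (rule std_normal_ln_neg_sq_le)
  have half_line: "set_integrable lborel {0<..} ?h"
    unfolding set_integrable_def
    by (rule Bochner_Integration.integrable_bound[OF D]) (auto intro!: AE_I2 order_trans[OF bound])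
  show "integrable lborel ?h"
    by (rule integrable_even[OF _ _ half_line]) (simp_all add: std_normal_density_def)
  have "integral\<^sup>L lborel ?h = 2 * (LBINT t:{0<..}. ?h t)"
    by (rule integral_even[OF _ _ half_line]) (simp_all add: std_normal_density_def)
  also have "(LBINT t:{0<..}. ?h t) \<le> integral\<^sup>L lborel D"
    unfolding set_lebesgue_integral_def
    by (rule integral_mono[OF half_line[unfolded set_integrable_def] D]) (simp add: bound)
  also have "integral\<^sup>L lborel D = 8 / sqrt (2 * pi)"
    using set_integrable_ln_sq_01(2) by (simp add: D_def[abs_def] set_lebesgue_integral_def)
  also have "2 * (8 / sqrt (2 * pi)) \<le> 7"
  proof -
    have "16 / 7 \<le> sqrt (2 * pi)" using pi_gt3 by (intro real_le_rsqrt) (simp add: power2_eq_square)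
    then show ?thesis by (simp add: field_simps)
  qed
  finally show "integral\<^sup>L lborel ?h \<le> 7" by simp
qed

lemma ln_sq_le_self:
  fixes s :: real
  assumes "1 \<le> s"
  shows "(ln s)\<^sup>2 \<le> s"
proof -
  define r where "r = sqrt (sqrt s)"
  have r: "1 \<le> r" "s = (r\<^sup>2)\<^sup>2" using assms by (simp_all add: r_def)
  then have "ln s = 4 * ln r" by (simp add: ln_realpow)
  also have "\<dots> \<le> 4 * (r - 1)" using r(1) ln_le_minus_one[of r] by simp
  also have "\<dots> \<le> r\<^sup>2"
    using zero_le_power2[of "r - 2"] by (simp add: power2_eq_square algebra_simps)
  finally have "ln s \<le> r\<^sup>2" .
  moreover have "0 \<le> ln s" using assms by simp
  ultimately have "(ln s)\<^sup>2 \<le> (r\<^sup>2)\<^sup>2" by (rule power_mono)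
  with r(2) show ?thesis by simp
qed

lemma ln_sq_le_ln_neg_sq_add:
  fixes s :: real
  assumes "0 < s"
  shows "(ln s)\<^sup>2 \<le> ln_neg_sq s + s"
proof (cases "s < 1")
  case True
  with assms have "ln_neg_sq s = (ln s)\<^sup>2" by (simp add: ln_neg_sq_def)
  with assms show ?thesis by simp
next
  case False
  then have "ln_neg_sq s = 0" by (simp add: ln_neg_sq_def)
  with False show ?thesis using ln_sq_le_self[of s] by simp
qed

lemma abs_ln_le:
  fixes s :: real
  assumes "0 \<le> s"
  shows "\<bar>ln s\<bar> \<le> 1 + s + ln_neg_sq s"
proof (cases "s = 0")
  case False
  have "\<bar>ln s\<bar> \<le> 1 + (ln s)\<^sup>2"
    using zero_le_power2[of "\<bar>ln s\<bar> - 1"] by (simp add: power2_eq_square algebra_simps)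
  with ln_sq_le_ln_neg_sq_add[of s] assms False show ?thesis by simp
qed simp

lemma
  shows integrable_std_normal_ln_sq: "integrable lborel (\<lambda>t. std_normal_density t * ln (t\<^sup>2))"
    and integral_std_normal_ln_sq: "integral\<^sup>L lborel (\<lambda>t. std_normal_density t * ln (t\<^sup>2)) = C0"
proof -
  let ?h = "\<lambda>t::real. std_normal_density t * ln (t\<^sup>2)"
  have "integrable lborel (\<lambda>t. std_normal_density t * (1 + t\<^sup>2 + ln_neg_sq (t\<^sup>2)))"
    using integrable_std_normal_moment[of 2] integrable_std_normal_ln_neg_sq
    by (simp add: distrib_left)
  then show integrable: "integrable lborel ?h"
    by (rule Bochner_Integration.integrable_bound)
       (auto intro!: AE_I2 mult_left_mono abs_ln_le simp: abs_mult)
  have "set_integrable lborel {0<..} ?h"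
    unfolding set_integrable_def using integrable by (rule integrable_mult_indicator[rotated]) simp
  then have "integral\<^sup>L lborel ?h = 2 * (LBINT t:{0<..}. ?h t)"
    by (rule integral_even[rotated 2]) (simp_all add: std_normal_density_def)
  also have "(LBINT t:{0<..}. ?h t) = (LBINT t:{0<..}. 2 / sqrt (2 * pi) * (ln t * exp (- t\<^sup>2 / 2)))"
    by (rule set_lebesgue_integral_cong) (auto simp: std_normal_density_def ln_realpow)
  also have "\<dots> = 2 / sqrt (2 * pi) * (LBINT t:{0<..}. ln t * exp (- t\<^sup>2 / 2))"
    by (rule set_integral_mult_right)
  finally show "integral\<^sup>L lborel ?h = C0" by (simp add: C0_def)
qed

lemma
  fixes u :: "real^'n"
  assumes "norm u = 1"
  shows integrable_std_gaussian_ln_inner_sq: "integrable std_gaussian (\<lambda>x. ln ((u \<bullet> x)\<^sup>2))"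
    and integral_std_gaussian_ln_inner_sq: "integral\<^sup>L std_gaussian (\<lambda>x. ln ((u \<bullet> x)\<^sup>2)) = C0"
    and integrable_std_gaussian_ln_neg_sq_inner_sq:
      "integrable std_gaussian (\<lambda>x. ln_neg_sq ((u \<bullet> x)\<^sup>2))"
    and integral_std_gaussian_ln_neg_sq_inner_sq_le:
      "integral\<^sup>L std_gaussian (\<lambda>x. ln_neg_sq ((u \<bullet> x)\<^sup>2)) \<le> 7"
    and AE_std_gaussian_inner_nonzero: "AE x in std_gaussian. u \<bullet> x \<noteq> 0"
  using integrable_std_gaussian_inner_iff[OF assms, of "\<lambda>t. ln (t\<^sup>2)"]
    integral_std_gaussian_inner[OF assms, of "\<lambda>t. ln (t\<^sup>2)"]
    integrable_std_gaussian_inner_iff[OF assms, of "\<lambda>t. ln_neg_sq (t\<^sup>2)"]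
    integral_std_gaussian_inner[OF assms, of "\<lambda>t. ln_neg_sq (t\<^sup>2)"]
    integrable_std_normal_ln_sq integral_std_normal_ln_sq
    integrable_std_normal_ln_neg_sq integral_std_normal_ln_neg_sq_le
    AE_std_gaussian_inner[OF assms AE_lborel_singleton[of 0]]
  by simp_all

lemma
  fixes v :: "real^'n"
  shows integrable_std_gaussian_inner_sq: "integrable std_gaussian (\<lambda>x. (v \<bullet> x)\<^sup>2)"
    and integral_std_gaussian_inner_sq: "integral\<^sup>L std_gaussian (\<lambda>x. (v \<bullet> x)\<^sup>2) = (norm v)\<^sup>2"
proof -
  have moment: "integrable lborel (\<lambda>t. std_normal_density t * t\<^sup>2)"
      "integral\<^sup>L lborel (\<lambda>t. std_normal_density t * t\<^sup>2) = 1"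
    using integrable_std_normal_moment[of 2] integral_std_normal_moment_even[of 1]
    by (simp_all add: fact_numeral)
  have scale: "(v \<bullet> x)\<^sup>2 = (norm v)\<^sup>2 * (sgn v \<bullet> x)\<^sup>2" for x
    by (cases "v = 0") (simp_all add: sgn_div_norm power_mult_distrib field_simps)
  show "integrable std_gaussian (\<lambda>x. (v \<bullet> x)\<^sup>2)"
    using integrable_std_gaussian_inner_iff[of "sgn v" power2] moment
    by (cases "v = 0") (simp_all add: scale norm_sgn)
  show "integral\<^sup>L std_gaussian (\<lambda>x. (v \<bullet> x)\<^sup>2) = (norm v)\<^sup>2"
    using integral_std_gaussian_inner[of "sgn v" power2] moment
    by (cases "v = 0") (simp_all add: scale norm_sgn)
qed

lemma
  fixes v :: "'i \<Rightarrow> real^'n"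
  assumes "finite J"
  shows integrable_std_gaussian_sum_squares:
      "integrable std_gaussian (\<lambda>x. \<Sum>k\<in>J. (v k \<bullet> x)\<^sup>2)"
    and integral_std_gaussian_sum_squares:
      "integral\<^sup>L std_gaussian (\<lambda>x. \<Sum>k\<in>J. (v k \<bullet> x)\<^sup>2) = (\<Sum>k\<in>J. (norm (v k))\<^sup>2)"
  by (simp_all add: integrable_std_gaussian_inner_sq integral_std_gaussian_inner_sq integral_sum)

section \<open>Jensen's inequality for normalized sums of squares\<close>

lemma convex_on_compose_mono:
  fixes f :: "'a::real_vector \<Rightarrow> real"
  assumes f: "convex_on S f" and g: "convex_on T g" "mono_on T g" and "f ` S \<subseteq> T"
  shows "convex_on S (\<lambda>x. g (f x))"
  unfolding convex_on_def
proof (intro conjI ballI allI impI)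
  show "convex S" using f by (rule convex_on_imp_convex)
  fix x y and u v :: real
  assume xy: "x \<in> S" "y \<in> S" and uv: "0 \<le> u" "0 \<le> v" "u + v = 1"
  have fxy: "f x \<in> T" "f y \<in> T" using assms(4) xy by auto
  have "u *\<^sub>R x + v *\<^sub>R y \<in> S"
    using \<open>convex S\<close> xy uv by (simp add: convex_def)
  moreover have "u * f x + v * f y \<in> T"
    using convex_on_imp_convex[OF g(1)] fxy uv by (simp add: convex_def)
  moreover have "f (u *\<^sub>R x + v *\<^sub>R y) \<le> u * f x + v * f y"
    using f xy uv by (simp add: convex_on_def)
  ultimately have "g (f (u *\<^sub>R x + v *\<^sub>R y)) \<le> g (u * f x + v * f y)"
    using g(2) assms(4) by (auto intro: mono_onD)
  also have "\<dots> \<le> u * g (f x) + v * g (f y)"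
    using g(1) fxy uv by (simp add: convex_on_def)
  finally show "g (f (u *\<^sub>R x + v *\<^sub>R y)) \<le> u * g (f x) + v * g (f y)" .
qed

lemma convex_on_ln_neg_sq: "convex_on {0<..} ln_neg_sq"
proof -
  have "convex_on UNIV (\<lambda>y::real. max y 0)"
    unfolding convex_on_def
  proof (intro conjI ballI allI impI)
    fix x y u v :: real
    assume "0 \<le> u" "0 \<le> v"
    then have "u * x \<le> u * max x 0" "v * y \<le> v * max y 0"
      by (simp_all add: mult_left_mono)
    with \<open>0 \<le> u\<close> \<open>0 \<le> v\<close> show "max (u *\<^sub>R x + v *\<^sub>R y) 0 \<le> u * max x 0 + v * max y 0"
      by simp
  qed simp
  moreover have "convex_on {0..} (\<lambda>y::real. y\<^sup>2)"
    by (rule convex_on_subset[OF convex_power2]) auto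
  moreover have "mono_on {0..} (\<lambda>y::real. y\<^sup>2)"
    by (auto intro!: mono_onI power_mono)
  ultimately have "convex_on UNIV (\<lambda>y::real. (max y 0)\<^sup>2)"
    by (rule convex_on_compose_mono) auto
  moreover have "mono_on UNIV (\<lambda>y::real. (max y 0)\<^sup>2)"
    by (auto intro!: mono_onI power_mono)
  moreover have "convex_on {0<..} (\<lambda>s. - ln s)"
    using ln_concave by (simp add: concave_on_def)
  ultimately show ?thesis
    unfolding ln_neg_sq_def[abs_def] using convex_on_compose_mono[of "{0<..}" "\<lambda>s. - ln s" UNIV] by simp
qed

lemma integrable_squeeze:
  fixes f g h :: "'a \<Rightarrow> real"
  assumes "integrable M g" "integrable M h" "f \<in> borel_measurable M"
    and "AE x in M. g x \<le> f x \<and> f x \<le> h x"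
  shows "integrable M f"
proof (rule Bochner_Integration.integrable_bound[where f = "\<lambda>x. \<bar>g x\<bar> + \<bar>h x\<bar>"])
  show "integrable M (\<lambda>x. \<bar>g x\<bar> + \<bar>h x\<bar>)"
    by (intro Bochner_Integration.integrable_add integrable_abs assms(1,2))
  show "AE x in M. norm (f x) \<le> norm (\<bar>g x\<bar> + \<bar>h x\<bar>)"
    using assms(4) by eventually_elim auto
qed (rule assms(3))

locale normalized_sum_of_squares =
  fixes J :: "'i set" and v :: "'i \<Rightarrow> real^'n" and q :: "real^'n \<Rightarrow> real"
  assumes finite_J: "finite J"
    and nonzero: "\<And>k. k \<in> J \<Longrightarrow> v k \<noteq> 0"
    and sum_norm_sq: "(\<Sum>k\<in>J. (norm (v k))\<^sup>2) = 1"
    and q_eq: "q = (\<lambda>x. \<Sum>k\<in>J. (v k \<bullet> x)\<^sup>2)"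
begin

lemma q_eq_convex_combination: "q x = (\<Sum>k\<in>J. (norm (v k))\<^sup>2 *\<^sub>R (sgn (v k) \<bullet> x)\<^sup>2)"
  unfolding q_eq
  by (intro sum.cong refl) (simp add: nonzero sgn_div_norm power_mult_distrib field_simps)

lemma norm_sgn_v: "k \<in> J \<Longrightarrow> norm (sgn (v k)) = 1"
  by (simp add: nonzero norm_sgn)

lemma AE_inner_sq_pos: "AE x in std_gaussian. \<forall>k\<in>J. 0 < (sgn (v k) \<bullet> x)\<^sup>2"
proof (rule AE_finite_allI[OF finite_J])
  fix k assume "k \<in> J"
  from AE_std_gaussian_inner_nonzero[OF norm_sgn_v[OF this]]
  show "AE x in std_gaussian. 0 < (sgn (v k) \<bullet> x)\<^sup>2" by simp
qed

lemma J_nonempty: "J \<noteq> {}"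
  using sum_norm_sq by auto

lemma q_pos:
  assumes "\<forall>k\<in>J. 0 < (sgn (v k) \<bullet> x)\<^sup>2"
  shows "0 < q x"
  unfolding q_eq_convex_combination using finite_J J_nonempty nonzero assms by (intro sum_pos) auto

lemma jensen_q:
  assumes "convex_on {0<..} f" "\<forall>k\<in>J. 0 < (sgn (v k) \<bullet> x)\<^sup>2"
  shows "f (q x) \<le> (\<Sum>k\<in>J. (norm (v k))\<^sup>2 * f ((sgn (v k) \<bullet> x)\<^sup>2))"
  unfolding q_eq_convex_combination
  by (rule convex_on_sum[OF finite_J J_nonempty assms(1) sum_norm_sq]) (use assms(2) in auto)

lemma integrable_q: "integrable std_gaussian q"
  and integral_q: "integral\<^sup>L std_gaussian q = 1"
  using integrable_std_gaussian_sum_squares[OF finite_J, of v]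
    integral_std_gaussian_sum_squares[OF finite_J, of v]
  by (simp_all add: q_eq sum_norm_sq)

lemma borel_measurable_q [measurable]: "q \<in> borel_measurable std_gaussian"
  using integrable_q by (rule borel_measurable_integrable)

lemma
  shows integrable_ln_q: "integrable std_gaussian (\<lambda>x. ln (q x))"
    and integral_ln_q_ge: "C0 \<le> integral\<^sup>L std_gaussian (\<lambda>x. ln (q x))"
    and integral_ln_q_le: "integral\<^sup>L std_gaussian (\<lambda>x. ln (q x)) \<le> 0"
proof -
  interpret prob_space "std_gaussian :: (real^'n) measure" by (rule prob_space_std_gaussian)
  let ?L = "\<lambda>x. \<Sum>k\<in>J. (norm (v k))\<^sup>2 * ln ((sgn (v k) \<bullet> x)\<^sup>2)"
  have L: "integrable std_gaussian ?L"
    by (intro Bochner_Integration.integrable_sum integrable_mult_right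
        integrable_std_gaussian_ln_inner_sq norm_sgn_v)
  have "integral\<^sup>L std_gaussian ?L = (\<Sum>k\<in>J. (norm (v k))\<^sup>2 * C0)"
    by (simp add: integral_sum integrable_std_gaussian_ln_inner_sq
        integral_std_gaussian_ln_inner_sq norm_sgn_v)
  then have integral_L: "integral\<^sup>L std_gaussian ?L = C0"
    by (simp add: sum_distrib_right[symmetric] sum_norm_sq)
  have q_minus_1: "integrable std_gaussian (\<lambda>x. q x - 1)"
    using integrable_q by simp
  have bounds: "AE x in std_gaussian. ?L x \<le> ln (q x) \<and> ln (q x) \<le> q x - 1"
    using AE_inner_sq_pos
  proof eventually_elim
    case (elim x)
    have "convex_on {0<..} (\<lambda>s. - ln s)" using ln_concave by (simp add: concave_on_def)
    from jensen_q[OF this elim] have "?L x \<le> ln (q x)" by (simp add: sum_negf)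
    moreover have "ln (q x) \<le> q x - 1" using q_pos[OF elim] by (rule ln_le_minus_one)
    ultimately show ?case ..
  qed
  show "integrable std_gaussian (\<lambda>x. ln (q x))"
    by (rule integrable_squeeze[OF L q_minus_1 _ bounds]) measurable
  then show "C0 \<le> integral\<^sup>L std_gaussian (\<lambda>x. ln (q x))"
    using integral_mono_AE[OF L _ AE_mp[OF bounds]] integral_L by auto
  have "integral\<^sup>L std_gaussian (\<lambda>x. ln (q x)) \<le> integral\<^sup>L std_gaussian (\<lambda>x. q x - 1)"
    using \<open>integrable std_gaussian (\<lambda>x. ln (q x))\<close> q_minus_1 bounds
    by (intro integral_mono_AE) (auto elim: AE_mp)
  also have "\<dots> = 0" using integrable_q integral_q prob_space by simp
  finally show "integral\<^sup>L std_gaussian (\<lambda>x. ln (q x)) \<le> 0" .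
qed

lemma
  shows integrable_ln_q_sq: "integrable std_gaussian (\<lambda>x. (ln (q x))\<^sup>2)"
    and integral_ln_q_sq_le: "integral\<^sup>L std_gaussian (\<lambda>x. (ln (q x))\<^sup>2) \<le> 8"
proof -
  let ?N = "\<lambda>x. \<Sum>k\<in>J. (norm (v k))\<^sup>2 * ln_neg_sq ((sgn (v k) \<bullet> x)\<^sup>2)"
  have N: "integrable std_gaussian ?N"
    by (intro Bochner_Integration.integrable_sum integrable_mult_right
        integrable_std_gaussian_ln_neg_sq_inner_sq norm_sgn_v)
  have "integral\<^sup>L std_gaussian ?N \<le> (\<Sum>k\<in>J. (norm (v k))\<^sup>2 * 7)"
    by (auto simp: integral_sum integrable_std_gaussian_ln_neg_sq_inner_sq norm_sgn_v
        intro!: sum_mono mult_left_mono integral_std_gaussian_ln_neg_sq_inner_sq_le)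
  then have integral_N: "integral\<^sup>L std_gaussian ?N \<le> 7"
    by (simp add: sum_distrib_right[symmetric] sum_norm_sq)
  have N_q: "integrable std_gaussian (\<lambda>x. ?N x + q x)"
    using N integrable_q by simp
  have bounds: "AE x in std_gaussian. 0 \<le> (ln (q x))\<^sup>2 \<and> (ln (q x))\<^sup>2 \<le> ?N x + q x"
    using AE_inner_sq_pos
  proof eventually_elim
    case (elim x)
    have "(ln (q x))\<^sup>2 \<le> ln_neg_sq (q x) + q x"
      by (rule ln_sq_le_ln_neg_sq_add[OF q_pos[OF elim]])
    with jensen_q[OF convex_on_ln_neg_sq elim] show ?case by simp
  qed
  show integrable: "integrable std_gaussian (\<lambda>x. (ln (q x))\<^sup>2)"
    by (rule integrable_squeeze[OF integrable_zero N_q _ bounds]) measurable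
  have "integral\<^sup>L std_gaussian (\<lambda>x. (ln (q x))\<^sup>2) \<le> integral\<^sup>L std_gaussian (\<lambda>x. ?N x + q x)"
    using bounds by (intro integral_mono_AE[OF integrable N_q]) (auto elim: AE_mp)
  also have "\<dots> = integral\<^sup>L std_gaussian ?N + 1"
    using N integrable_q integral_q by simp
  finally show "integral\<^sup>L std_gaussian (\<lambda>x. (ln (q x))\<^sup>2) \<le> 8"
    using integral_N by simp
qed

end

theorem theorem3p3:
  fixes q :: "real ^ 'n \<Rightarrow> real"
  assumes "quadratic_form q"
    and "\<forall>x. q x \<ge> 0"
    and "gaussE q = 1"
  shows "integrable std_gaussian (\<lambda>x. ln (q x)) \<and>
         integrable std_gaussian (\<lambda>x. (ln (q x))\<^sup>2) \<and>
         C0 \<le> gaussE (\<lambda>x. ln (q x)) \<and> gaussE (\<lambda>x. ln (q x)) \<le> 0 \<and>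
         0 \<le> gaussE (\<lambda>x. (ln (q x))\<^sup>2) \<and> gaussE (\<lambda>x. (ln (q x))\<^sup>2) \<le> 8"
proof -
  obtain m and v :: "nat \<Rightarrow> real^'n"
    where nonzero: "\<And>k. k < m \<Longrightarrow> v k \<noteq> 0" and q: "q = (\<lambda>x. \<Sum>k<m. (v k \<bullet> x)\<^sup>2)"
    using nonneg_quadratic_form_eq_sum_squares[OF assms(1,2)] by (metis ext)
  have "(\<Sum>k<m. (norm (v k))\<^sup>2) = 1"
    using assms(3) integral_std_gaussian_sum_squares[of "{..<m}" v] by (simp add: gaussE_def q)
  then interpret normalized_sum_of_squares "{..<m}" v q
    using nonzero q by unfold_locales auto
  have "0 \<le> gaussE (\<lambda>x. (ln (q x))\<^sup>2)"
    unfolding gaussE_def by (rule integral_nonneg_AE) simp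
  then show ?thesis
    using integrable_ln_q integral_ln_q_ge integral_ln_q_le integrable_ln_q_sq integral_ln_q_sq_le
    by (simp add: gaussE_def)
qed

end
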